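(* Let $X$ be a finite set with $|X|\ge 2$, $f:2^X\to\mathbb{R}_{\ge0}$ a normalized monotone submodular function possessing supermodularity of conditioning with $f(x)>0$ for all $x\in X$, and $n\le|X|$ a positive integer. Let $x_1,\dots,x_n$ be produced by the pessimistic algorithm: $S_0=\emptyset$ and for $i=1,\dots,n$, $x_i\in\arg\max_{x\in X\setminus S_{i-1}}\underline f(x\mid S_{i-1})$, $S_i=S_{i-1}\cup\{x_i\}$. Then for $i\in\{1,2\}$ (with $i\le n$), $f(x_i\mid S_{i-1})=\max_{x\in X\setminus S_{i-1}}f(x\mid S_{i-1})$, and for every $3\le i\le n$, \[ f(x_i\mid S_{i-1})\ \ge\ \big(1-\min\{(i-1)\tau_2,1\}\big)\max_{x\in X\setminus S_{i-1}} f(x\mid S_{i-1}). \] That is, the factors $\alpha_i=1$ for $i\le2$ and $\alpha_i=1/(1-\min\{(i-1)\tau_2,1\})$ for $i>2$ (with $\alpha_i=\infty$ when $(i-1)\tau_2\ge1$) satisfy $\alpha_i f(x_i\mid S_{i-1})\ge\max_{x\in X\setminus S_{i-1}}f(x\mid S_{i-1})$.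
   Context: $f(x\mid A):=f(A\cup\{x\})-f(A)$, $f(x):=f(\{x\})$, $f(x\mid y):=f(x\mid\{y\})$. Pairwise lower estimate: $\underline f(x\mid S):=f(x)-\sum_{y\in S}(f(x)-f(x\mid y))$. 2-cardinality curvature: $\tau_2:=1-\min_{x\in X,\ y\in X\setminus\{x\}} f(x\mid y)/f(x)$. Supermodularity of conditioning: for all $S\subseteq X$, $A\subseteq B\subseteq X$, $C\subseteq X\setminus B$, $f(S\mid A)-f(S\mid A\cup C)\ge f(S\mid B)-f(S\mid B\cup C)$, where $f(T\mid A):=f(A\cup T)-f(A)$. *)

theory Defs
  imports "HOL-Analysis.Analysis"
begin

definition marg :: "('a set \<Rightarrow> real) \<Rightarrow> 'a \<Rightarrow> 'a set \<Rightarrow> real" where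
  "marg f x A = f (A \<union> {x}) - f A"

definition cond :: "('a set \<Rightarrow> real) \<Rightarrow> 'a set \<Rightarrow> 'a set \<Rightarrow> real" where
  "cond f T A = f (A \<union> T) - f A"

definition lower_est :: "('a set \<Rightarrow> real) \<Rightarrow> 'a \<Rightarrow> 'a set \<Rightarrow> real" where
  "lower_est f x S = f {x} - (\<Sum>y\<in>S. f {x} - marg f x {y})"

definition tau2 :: "('a set \<Rightarrow> real) \<Rightarrow> 'a set \<Rightarrow> real" where
  "tau2 f X = 1 - Min {marg f x {y} / f {x} | x y. x \<in> X \<and> y \<in> X - {x}}"

definition normalized :: "('a set \<Rightarrow> real) \<Rightarrow> bool" where
  "normalized f \<longleftrightarrow> f {} = 0"

definition monotone_set_fun :: "'a set \<Rightarrow> ('a set \<Rightarrow> real) \<Rightarrow> bool" where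
  "monotone_set_fun X f \<longleftrightarrow> (\<forall>A B. A \<subseteq> B \<and> B \<subseteq> X \<longrightarrow> f A \<le> f B)"

definition submodular :: "'a set \<Rightarrow> ('a set \<Rightarrow> real) \<Rightarrow> bool" where
  "submodular X f \<longleftrightarrow> (\<forall>A B. A \<subseteq> X \<and> B \<subseteq> X \<longrightarrow> f (A \<union> B) + f (A \<inter> B) \<le> f A + f B)"

definition supermodular_conditioning :: "'a set \<Rightarrow> ('a set \<Rightarrow> real) \<Rightarrow> bool" where
  "supermodular_conditioning X f \<longleftrightarrow>
     (\<forall>S A B C. S \<subseteq> X \<and> A \<subseteq> B \<and> B \<subseteq> X \<and> C \<subseteq> X - B \<longrightarrow>
        cond f S A - cond f S (A \<union> C) \<ge> cond f S B - cond f S (B \<union> C))"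

definition prefix_set :: "(nat \<Rightarrow> 'a) \<Rightarrow> nat \<Rightarrow> 'a set" where
  "prefix_set xs i = xs ` {1..i}"

end

theory Submission
  imports Defs
begin

text \<open>Supermodularity of conditioning says that the loss in the gain of x caused by one more
element y only shrinks as the conditioning set grows; summing these losses over S shows that the
pairwise estimate never overshoots the true gain. Every pairwise loss f(x) - f(x | y) is at most
\<open>\<tau>\<^sub>2 f(x)\<close>, so the estimate of any candidate is at least \<open>(1 - |S| \<tau>\<^sub>2)\<close> times its
singleton value, which by submodularity dominates its true gain. Hence the element maximising
the estimate has true gain at least \<open>(1 - |S| \<tau>\<^sub>2)\<close> times the best true gain; for
\<open>|S| \<le> 1\<close> the estimate is exact.\<close>

lemma lower_est_le_marg:
  assumes "finite A" "A \<subseteq> X" "x \<in> X"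
    and norm: "normalized f" and supcond: "supermodular_conditioning X f"
  shows "lower_est f x A \<le> marg f x A"
  using assms(1,2)
proof (induction A rule: finite_induct)
  case empty
  then show ?case using norm by (simp add: lower_est_def marg_def normalized_def)
next
  case (insert y A)
  have "{x} \<subseteq> X" "{} \<subseteq> A" "A \<subseteq> X" "{y} \<subseteq> X - A"
    using \<open>x \<in> X\<close> insert.hyps(2) insert.prems by auto
  then have "cond f {x} A - cond f {x} (A \<union> {y}) \<le> cond f {x} {} - cond f {x} ({} \<union> {y})"
    using supcond unfolding supermodular_conditioning_def by blast
  then have "marg f x A - marg f x (insert y A) \<le> f {x} - marg f x {y}"
    using norm by (simp add: cond_def marg_def normalized_def insert_commute Un_commute)
  moreover have "lower_est f x (insert y A) = lower_est f x A - (f {x} - marg f x {y})"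
    using insert.hyps by (simp add: lower_est_def)
  ultimately show ?case using insert.IH insert.prems by simp
qed

lemma marg_le_singleton:
  assumes "x \<in> X" "A \<subseteq> X" "x \<notin> A" and norm: "normalized f" and submod: "submodular X f"
  shows "marg f x A \<le> f {x}"
proof -
  have "f (A \<union> {x}) + f (A \<inter> {x}) \<le> f A + f {x}"
    using submod assms(1,2) unfolding submodular_def by blast
  moreover have "A \<inter> {x} = {}" using \<open>x \<notin> A\<close> by auto
  ultimately show ?thesis using norm by (simp add: marg_def normalized_def)
qed

lemma marg_nonneg:
  assumes "x \<in> X" "A \<subseteq> X" and mono: "monotone_set_fun X f"
  shows "marg f x A \<ge> 0"
proof -
  have "A \<subseteq> A \<union> {x}" "A \<union> {x} \<subseteq> X" using assms(1,2) by auto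
  then show ?thesis using mono unfolding monotone_set_fun_def marg_def by auto
qed

lemma lower_est_eq_marg:
  assumes "finite S" "card S \<le> 1" and norm: "normalized f"
  shows "lower_est f x S = marg f x S"
proof -
  consider "S = {}" | z where "S = {z}"
    using assms(1,2) by (metis One_nat_def card_le_Suc0_iff_eq empty_iff insertI1 subsetI subset_singletonD)
  then show ?thesis
    by cases (use norm in \<open>simp_all add: lower_est_def marg_def normalized_def\<close>)
qed

lemma finite_pair_ratios:
  assumes "finite X"
  shows "finite {marg f x {y} / f {x} | x y. x \<in> X \<and> y \<in> X - {x}}"
proof -
  have "{marg f x {y} / f {x} | x y. x \<in> X \<and> y \<in> X - {x}}
        \<subseteq> (\<lambda>(x, y). marg f x {y} / f {x}) ` (X \<times> X)"
    by auto
  then show ?thesis using assms by (meson finite_SigmaI finite_imageI finite_subset)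
qed

lemma marg_pair_ge_curvature:
  assumes "finite X" "x \<in> X" "y \<in> X" "x \<noteq> y" and pos: "\<forall>x\<in>X. f {x} > 0"
  shows "(1 - tau2 f X) * f {x} \<le> marg f x {y}"
proof -
  have "Min {marg f x {y} / f {x} | x y. x \<in> X \<and> y \<in> X - {x}} \<le> marg f x {y} / f {x}"
    by (rule Min_le[OF finite_pair_ratios[OF \<open>finite X\<close>]]) (use assms in blast)
  then show ?thesis using pos \<open>x \<in> X\<close> by (simp add: tau2_def pos_le_divide_eq)
qed

lemma tau2_nonneg:
  assumes "finite X" "card X \<ge> 2" and pos: "\<forall>x\<in>X. f {x} > 0"
    and norm: "normalized f" and submod: "submodular X f"
  shows "tau2 f X \<ge> 0"
proof -
  obtain x y where xy: "x \<in> X" "y \<in> X" "x \<noteq> y"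
    using assms(1,2) card_le_Suc0_iff_eq[OF \<open>finite X\<close>] by (metis not_less_eq_eq numeral_2_eq_2)
  have "Min {marg f x {y} / f {x} | x y. x \<in> X \<and> y \<in> X - {x}} \<le> marg f x {y} / f {x}"
    by (rule Min_le[OF finite_pair_ratios[OF \<open>finite X\<close>]]) (use xy in blast)
  moreover have "marg f x {y} \<le> f {x}"
    using marg_le_singleton[OF \<open>x \<in> X\<close> _ _ norm submod, of "{y}"] xy by auto
  then have "marg f x {y} / f {x} \<le> 1" using pos xy by simp
  ultimately show ?thesis by (simp add: tau2_def)
qed

lemma lower_est_ge_curvature:
  assumes "finite X" "S \<subseteq> X" "y \<in> X - S" and pos: "\<forall>x\<in>X. f {x} > 0"
  shows "(1 - real (card S) * tau2 f X) * f {y} \<le> lower_est f y S"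
proof -
  have "(\<Sum>z\<in>S. f {y} - marg f y {z}) \<le> (\<Sum>z\<in>S. tau2 f X * f {y})"
  proof (rule sum_mono)
    fix z assume "z \<in> S"
    then have "(1 - tau2 f X) * f {y} \<le> marg f y {z}"
      using marg_pair_ge_curvature[OF \<open>finite X\<close>, of y z] assms by blast
    then show "f {y} - marg f y {z} \<le> tau2 f X * f {y}" by (simp add: algebra_simps)
  qed
  then show ?thesis by (simp add: lower_est_def algebra_simps)
qed

lemma pessimistic_step_exact:
  assumes "finite X" "finite S" "card S \<le> 1" "x \<in> X - S" and norm: "normalized f"
    and best: "\<forall>y\<in>X - S. lower_est f y S \<le> lower_est f x S"
  shows "marg f x S = Max {marg f y S | y. y \<in> X - S}"
proof -
  have "{marg f y S | y. y \<in> X - S} = (\<lambda>y. marg f y S) ` (X - S)" by blast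
  then show ?thesis
    using best assms(4) \<open>finite X\<close> lower_est_eq_marg[OF assms(2,3) norm]
    by (intro sym[OF Max_eqI]) auto
qed

lemma pessimistic_step_bound:
  assumes finX: "finite X" "card X \<ge> 2" and "S \<subseteq> X" "card S \<le> k" "x \<in> X - S"
    and norm: "normalized f" and mono: "monotone_set_fun X f" and submod: "submodular X f"
    and supcond: "supermodular_conditioning X f" and pos: "\<forall>x\<in>X. f {x} > 0"
    and best: "\<forall>y\<in>X - S. lower_est f y S \<le> lower_est f x S"
  shows "(1 - min (real k * tau2 f X) 1) * Max {marg f y S | y. y \<in> X - S} \<le> marg f x S"
proof -
  have gains: "{marg f y S | y. y \<in> X - S} = (\<lambda>y. marg f y S) ` (X - S)" by blast
  moreover have "Max ((\<lambda>y. marg f y S) ` (X - S)) \<in> (\<lambda>y. marg f y S) ` (X - S)"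
    using \<open>finite X\<close> \<open>x \<in> X - S\<close> by (intro Max_in) auto
  ultimately obtain y where y: "y \<in> X - S"
    and max_y: "Max {marg f y S | y. y \<in> X - S} = marg f y S"
    by auto
  show ?thesis
  proof (cases "real k * tau2 f X \<ge> 1")
    case True
    then show ?thesis using marg_nonneg[of x X S f] assms by simp
  next
    case False
    let ?c = "1 - real k * tau2 f X"
    have "?c * marg f y S \<le> ?c * f {y}"
      using False marg_le_singleton[of y X S f] y assms by (intro mult_left_mono) auto
    also have "\<dots> \<le> (1 - real (card S) * tau2 f X) * f {y}"
      using tau2_nonneg[OF finX pos norm submod] pos y \<open>card S \<le> k\<close>
      by (intro mult_right_mono) (auto intro: mult_right_mono)
    also have "\<dots> \<le> lower_est f y S"
      using lower_est_ge_curvature[OF \<open>finite X\<close> \<open>S \<subseteq> X\<close> y pos] .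
    also have "\<dots> \<le> lower_est f x S" using best y by blast
    also have "\<dots> \<le> marg f x S"
      using lower_est_le_marg[OF _ \<open>S \<subseteq> X\<close> _ norm supcond] \<open>x \<in> X - S\<close> \<open>S \<subseteq> X\<close>
        \<open>finite X\<close> finite_subset by blast
    finally show ?thesis using False max_y by simp
  qed
qed

lemma prefix_set_subset:
  assumes "\<forall>i\<in>{1..n}. xs i \<in> X - prefix_set xs (i - 1)" "i \<le> n"
  shows "prefix_set xs (i - 1) \<subseteq> X"
  using assms unfolding prefix_set_def by fastforce

lemma card_prefix_set: "card (prefix_set xs i) \<le> i"
  unfolding prefix_set_def using card_image_le[of "{1..i}" xs] by simp

theorem theorem5:
  fixes X :: "'a set" and f :: "'a set \<Rightarrow> real" and n :: nat and xs :: "nat \<Rightarrow> 'a"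
  assumes finX: "finite X" and cardX: "card X \<ge> 2"
    and nonneg: "\<forall>A. A \<subseteq> X \<longrightarrow> f A \<ge> 0"
    and norm: "normalized f"
    and mono: "monotone_set_fun X f"
    and submod: "submodular X f"
    and supcond: "supermodular_conditioning X f"
    and pos: "\<forall>x\<in>X. f {x} > 0"
    and n_pos: "n \<ge> 1" and n_le: "n \<le> card X"
    and alg_mem: "\<forall>i\<in>{1..n}. xs i \<in> X - prefix_set xs (i - 1)"
    and alg_max: "\<forall>i\<in>{1..n}. \<forall>y\<in>X - prefix_set xs (i - 1).
                    lower_est f y (prefix_set xs (i - 1)) \<le> lower_est f (xs i) (prefix_set xs (i - 1))"
  shows "(\<forall>i\<in>{1,2}. i \<le> n \<longrightarrow>
            marg f (xs i) (prefix_set xs (i - 1))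
              = Max {marg f y (prefix_set xs (i - 1)) | y. y \<in> X - prefix_set xs (i - 1)})
       \<and> (\<forall>i. 3 \<le> i \<and> i \<le> n \<longrightarrow>
            marg f (xs i) (prefix_set xs (i - 1))
              \<ge> (1 - min (real (i - 1) * tau2 f X) 1)
                 * Max {marg f y (prefix_set xs (i - 1)) | y. y \<in> X - prefix_set xs (i - 1)})"
proof (intro conjI ballI allI impI)
  fix i :: nat assume "i \<in> {1, 2}" "i \<le> n"
  then have "i \<in> {1..n}" by auto
  moreover have "card (prefix_set xs (i - 1)) \<le> 1"
    using card_prefix_set[of xs "i - 1"] \<open>i \<in> {1, 2}\<close> by auto
  ultimately show "marg f (xs i) (prefix_set xs (i - 1))
              = Max {marg f y (prefix_set xs (i - 1)) | y. y \<in> X - prefix_set xs (i - 1)}"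
    using alg_mem alg_max
    by (intro pessimistic_step_exact[OF finX _ _ _ norm]) (auto simp: prefix_set_def)
next
  fix i :: nat assume "3 \<le> i \<and> i \<le> n"
  then have "i \<in> {1..n}" by auto
  then show "marg f (xs i) (prefix_set xs (i - 1))
              \<ge> (1 - min (real (i - 1) * tau2 f X) 1)
                 * Max {marg f y (prefix_set xs (i - 1)) | y. y \<in> X - prefix_set xs (i - 1)}"
    using alg_mem alg_max
    by (intro pessimistic_step_bound[OF finX cardX prefix_set_subset[OF alg_mem] card_prefix_set
        _ norm mono submod supcond pos]) auto
qed

end
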